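(* Let $(A_0,A_1,A_2)$ be an extendable collection of cap sets in $\mathbb{F}_3^n$, and let $S \subseteq \{0,1,2\}^m$ be a recursively admissible set. Then $\left(S(A_0,A_1,A_2), A_1^m, A_2^m\right)$ is an extendable collection of cap sets in $\mathbb{F}_3^{nm}$.
   Context: A cap set is a set $A \subseteq \mathbb{F}_3^n$ such that the only solutions of $x+y+z=0$ with $x,y,z\in A$ are those with $x=y=z$. Cap sets $A_0,A_1,A_2\subseteq\mathbb{F}_3^n$ form an extendable collection if (1) whenever $x,y\in A_0$ (not necessarily distinct) and $z\in A_1\cup A_2$, $x+y+z\neq 0$; and (2) whenever $x\in A_0$, $y\in A_1$, $z\in A_2$, $x+y+z\neq 0$. A set $S\subseteq\{0,1,2\}^m$ is admissible if (1) for all distinct $s,s'\in S$ there are coordinates $i,j$ with $s_i=0\neq s'_i$ and $s_j\neq 0=s'_j$; and (2) for all distinct $s,s',s''\in S$ there is a coordinate $k$ such that the multiset $\{s_k,s'_k,s''_k\}$ equals $\{0,1,2\}$, $\{0,0,1\}$ or $\{0,0,2\}$. $S$ is recursively admissible if it is admissible, $|S|\ge 2$, and for every pair of distinct $s,s'\in S$ at least one of the following holds: (i) there are coordinates $i,j$ with $\{s_i,s'_i\}=\{0,1\}$ and $\{s_j,s'_j\}=\{0,2\}$; (ii) there is a coordinate $k$ with $s_k=s'_k=0$. For $s=(s_1,\dots,s_m)\in\{0,1,2\}^m$ put $s(A_0,A_1,A_2)=A_{s_1}\times\cdots\times A_{s_m}\subseteq\mathbb{F}_3^{nm}$ and $S(A_0,A_1,A_2)=\bigcup_{s\in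 S}s(A_0,A_1,A_2)$. $A_i^m$ denotes the $m$-fold direct product $A_i\times\cdots\times A_i\subseteq \mathbb{F}_3^{nm}$. *)

theory Defs
  imports Main "HOL-Library.Numeral_Type" "HOL-Library.Multiset"
begin

text \<open>The field F_3 is the type 3 (integers mod 3). An element of F_3^n is a
  list of length n over this type; addition is componentwise.\<close>

type_synonym f3vec = "3 list"

definition vec :: "nat \<Rightarrow> f3vec set" where
  "vec n = {x. length x = n}"

definition sum3_zero :: "f3vec \<Rightarrow> f3vec \<Rightarrow> f3vec \<Rightarrow> bool" where
  "sum3_zero x y z \<longleftrightarrow> map2 (+) (map2 (+) x y) z = replicate (length x) 0"

definition cap_set :: "nat \<Rightarrow> f3vec set \<Rightarrow> bool" where
  "cap_set n A \<longleftrightarrow> A \<subseteq> vec n \<and>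
     (\<forall>x\<in>A. \<forall>y\<in>A. \<forall>z\<in>A. sum3_zero x y z \<longrightarrow> x = y \<and> y = z)"

definition extendable :: "nat \<Rightarrow> f3vec set \<Rightarrow> f3vec set \<Rightarrow> f3vec set \<Rightarrow> bool" where
  "extendable n A0 A1 A2 \<longleftrightarrow>
     cap_set n A0 \<and> cap_set n A1 \<and> cap_set n A2 \<and>
     (\<forall>x\<in>A0. \<forall>y\<in>A0. \<forall>z\<in>A1 \<union> A2. \<not> sum3_zero x y z) \<and>
     (\<forall>x\<in>A0. \<forall>y\<in>A1. \<forall>z\<in>A2. \<not> sum3_zero x y z)"

definition words :: "nat \<Rightarrow> nat list set" where
  "words m = {s. length s = m \<and> set s \<subseteq> {0,1,2}}"

definition admissible :: "nat list set \<Rightarrow> bool" where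
  "admissible S \<longleftrightarrow>
     (\<forall>s\<in>S. \<forall>s'\<in>S. s \<noteq> s' \<longrightarrow>
        (\<exists>i<length s. \<exists>j<length s. s!i = 0 \<and> s'!i \<noteq> 0 \<and> s!j \<noteq> 0 \<and> s'!j = 0)) \<and>
     (\<forall>s\<in>S. \<forall>s'\<in>S. \<forall>s''\<in>S. s \<noteq> s' \<and> s \<noteq> s'' \<and> s' \<noteq> s'' \<longrightarrow>
        (\<exists>k<length s. {#s!k, s'!k, s''!k#} \<in> {{#0,1,2#}, {#0,0,1#}, {#0,0,2#}}))"

definition recursively_admissible :: "nat list set \<Rightarrow> bool" where
  "recursively_admissible S \<longleftrightarrow> admissible S \<and> 2 \<le> card S \<and>
     (\<forall>s\<in>S. \<forall>s'\<in>S. s \<noteq> s' \<longrightarrow>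
        (\<exists>i<length s. \<exists>j<length s. {s!i, s'!i} = {0,1} \<and> {s!j, s'!j} = {0,2}) \<or>
        (\<exists>k<length s. s!k = 0 \<and> s'!k = 0))"

definition sel :: "f3vec set \<Rightarrow> f3vec set \<Rightarrow> f3vec set \<Rightarrow> nat \<Rightarrow> f3vec set" where
  "sel A0 A1 A2 k = (if k = 0 then A0 else if k = 1 then A1 else A2)"

text \<open>s(A0,A1,A2) = A_{s_1} x ... x A_{s_m}, realised by concatenating the blocks.\<close>

definition word_prod :: "nat list \<Rightarrow> f3vec set \<Rightarrow> f3vec set \<Rightarrow> f3vec set \<Rightarrow> f3vec set" where
  "word_prod s A0 A1 A2 =
     {concat xs | xs. length xs = length s \<and> (\<forall>i<length s. xs!i \<in> sel A0 A1 A2 (s!i))}"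

definition set_prod :: "nat list set \<Rightarrow> f3vec set \<Rightarrow> f3vec set \<Rightarrow> f3vec set \<Rightarrow> f3vec set" where
  "set_prod S A0 A1 A2 = (\<Union>s\<in>S. word_prod s A0 A1 A2)"

definition power_prod :: "nat \<Rightarrow> f3vec set \<Rightarrow> f3vec set" where
  "power_prod m A = {concat xs | xs. length xs = m \<and> (\<forall>i<m. xs!i \<in> A)}"

end

(* An element of s(A0,A1,A2) is a concatenation of n-blocks, and a sum of three such
   concatenations vanishes iff it vanishes blockwise. If at some coordinate k the labels
   s_k, t_k, u_k form one of the multisets {0,1,2}, {0,0,1}, {0,0,2}, extendability of
   (A0,A1,A2) together with the symmetry of x + y + z excludes a zero sum in block k, hence in
   s(A) x t(A) x u(A). Admissibility provides such a coordinate for any three words of S that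
   are not all equal (for equal words each block is a cap set). Recursive admissibility
   provides one for two words of S and a constant word 1...1 or 2...2 (a common zero, or a
   pair {0,1} resp. {0,2} to complete), and for s, 1...1, 2...2 any zero of s will do. *)

theory Submission
  imports Defs
begin

lemma add_mset3_eq_cases:
  "{#a, b, c#} = {#x, y, z#} \<Longrightarrow>
     (a, b, c) \<in> {(x, y, z), (x, z, y), (y, x, z), (y, z, x), (z, x, y), (z, y, x)}"
  by (auto simp: add_eq_conv_ex)

lemma sum3_zero_iff_nth:
  "length y = length x \<Longrightarrow> length z = length x \<Longrightarrow>
     sum3_zero x y z \<longleftrightarrow> (\<forall>j<length x. x!j + y!j + z!j = 0)"
  unfolding sum3_zero_def by (simp add: list_eq_iff_nth_eq)

lemma sum3_zero_swap12:
  "length y = length x \<Longrightarrow> length z = length x \<Longrightarrow> sum3_zero x y z \<longleftrightarrow> sum3_zero y x z"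
  by (simp add: sum3_zero_iff_nth add.commute)

lemma sum3_zero_swap23:
  "length y = length x \<Longrightarrow> length z = length x \<Longrightarrow> sum3_zero x y z \<longleftrightarrow> sum3_zero x z y"
  by (simp add: sum3_zero_iff_nth ac_simps)

lemma sum3_zero_append:
  assumes "length y = length x" "length z = length x" "length y' = length x'" "length z' = length x'"
  shows "sum3_zero (x @ x') (y @ y') (z @ z') \<longleftrightarrow> sum3_zero x y z \<and> sum3_zero x' y' z'"
  using assms unfolding sum3_zero_def by (simp add: replicate_add)

lemma sum3_zero_concat:
  assumes "map length ys = map length xs" "map length zs = map length xs"
  shows "sum3_zero (concat xs) (concat ys) (concat zs) \<longleftrightarrow>
           (\<forall>i<length xs. sum3_zero (xs!i) (ys!i) (zs!i))"
  using assms
proof (induction xs arbitrary: ys zs)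
  case Nil
  then show ?case by (simp add: sum3_zero_def)
next
  case (Cons x xs)
  obtain y ys' where ys: "ys = y # ys'" using Cons.prems(1) by (cases ys) auto
  obtain z zs' where zs: "zs = z # zs'" using Cons.prems(2) by (cases zs) auto
  have lengths: "length (concat ys') = length (concat xs)" "length (concat zs') = length (concat xs)"
    using Cons.prems by (simp_all add: ys zs length_concat)
  show ?case
    using Cons.prems lengths by (simp add: ys zs sum3_zero_append Cons.IH All_less_Suc2)
qed

definition forbidden_labels :: "nat multiset set" where
  "forbidden_labels = {{#0, 1, 2#}, {#0, 0, 1#}, {#0, 0, 2#}}"

lemma sel_cap_set:
  "cap_set n A0 \<Longrightarrow> cap_set n A1 \<Longrightarrow> cap_set n A2 \<Longrightarrow> cap_set n (sel A0 A1 A2 k)"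
  by (simp add: sel_def)

lemma extendable_sel_cap_set: "extendable n A0 A1 A2 \<Longrightarrow> cap_set n (sel A0 A1 A2 k)"
  by (simp add: extendable_def sel_cap_set)

lemma extendable_no_zero_sum:
  assumes ext: "extendable n A0 A1 A2" and labels: "{#a, b, c#} \<in> forbidden_labels"
    and "x \<in> sel A0 A1 A2 a" "y \<in> sel A0 A1 A2 b" "z \<in> sel A0 A1 A2 c"
  shows "\<not> sum3_zero x y z"
proof
  assume "sum3_zero x y z"
  define zero_sum where "zero_sum a b c \<longleftrightarrow>
    (\<exists>x\<in>sel A0 A1 A2 a. \<exists>y\<in>sel A0 A1 A2 b. \<exists>z\<in>sel A0 A1 A2 c. sum3_zero x y z)" for a b c
  have length_sel: "length x = n" if "x \<in> sel A0 A1 A2 k" for x k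
    using extendable_sel_cap_set[OF ext, of k] that by (auto simp: cap_set_def vec_def)
  have swap12: "zero_sum a b c \<longleftrightarrow> zero_sum b a c" for a b c
    unfolding zero_sum_def using sum3_zero_swap12 length_sel by metis
  have swap23: "zero_sum a b c \<longleftrightarrow> zero_sum a c b" for a b c
    unfolding zero_sum_def using sum3_zero_swap23 length_sel by metis
  \<comment> \<open>Permuting the labels reduces to the sorted triples, which extendability excludes.\<close>
  have "\<not> zero_sum 0 1 2" "\<not> zero_sum 0 0 1" "\<not> zero_sum 0 0 2"
    using ext by (auto simp: zero_sum_def extendable_def sel_def)
  moreover have "zero_sum a b c"
    using \<open>sum3_zero x y z\<close> assms(3-5) unfolding zero_sum_def by blast
  ultimately show False
    using labels unfolding forbidden_labels_def
    by (auto dest!: add_mset3_eq_cases simp: swap12 swap23)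
qed

lemma sel_subset: "A0 \<subseteq> B \<Longrightarrow> A1 \<subseteq> B \<Longrightarrow> A2 \<subseteq> B \<Longrightarrow> sel A0 A1 A2 k \<subseteq> B"
  by (simp add: sel_def)

lemma map_length_blocks:
  assumes "A0 \<subseteq> vec n" "A1 \<subseteq> vec n" "A2 \<subseteq> vec n"
    and "length xs = length s" "\<forall>i<length s. xs!i \<in> sel A0 A1 A2 (s!i)"
  shows "map length xs = replicate (length s) n"
  using assms sel_subset[of A0 "vec n" A1 A2] by (auto intro!: nth_equalityI simp: vec_def subset_eq)

lemma word_prod_subset_vec:
  assumes "A0 \<subseteq> vec n" "A1 \<subseteq> vec n" "A2 \<subseteq> vec n"
  shows "word_prod s A0 A1 A2 \<subseteq> vec (n * length s)"
  using map_length_blocks[OF assms] by (auto simp: word_prod_def vec_def length_concat sum_list_replicate)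

lemma sum3_zero_word_prod_blocks:
  assumes "A0 \<subseteq> vec n" "A1 \<subseteq> vec n" "A2 \<subseteq> vec n"
    and "x \<in> word_prod s A0 A1 A2" "y \<in> word_prod t A0 A1 A2" "z \<in> word_prod u A0 A1 A2"
    and "length t = length s" "length u = length s" and "sum3_zero x y z"
  obtains xs ys zs
  where "x = concat xs" "y = concat ys" "z = concat zs"
    and "length xs = length s" "length ys = length s" "length zs = length s"
    and "\<And>i. i < length s \<Longrightarrow> xs!i \<in> sel A0 A1 A2 (s!i) \<and> ys!i \<in> sel A0 A1 A2 (t!i) \<and>
           zs!i \<in> sel A0 A1 A2 (u!i) \<and> sum3_zero (xs!i) (ys!i) (zs!i)"
proof -
  obtain xs where xs: "x = concat xs" "length xs = length s" "\<forall>i<length s. xs!i \<in> sel A0 A1 A2 (s!i)"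
    using assms(4) by (auto simp: word_prod_def)
  obtain ys where ys: "y = concat ys" "length ys = length s" "\<forall>i<length s. ys!i \<in> sel A0 A1 A2 (t!i)"
    using assms(5,7) by (auto simp: word_prod_def)
  obtain zs where zs: "z = concat zs" "length zs = length s" "\<forall>i<length s. zs!i \<in> sel A0 A1 A2 (u!i)"
    using assms(6,8) by (auto simp: word_prod_def)
  have "map length ys = map length xs" "map length zs = map length xs"
    using xs ys zs assms(7,8) map_length_blocks[OF assms(1-3)] by metis+
  then have "\<forall>i<length s. sum3_zero (xs!i) (ys!i) (zs!i)"
    using sum3_zero_concat assms(9) xs ys zs by metis
  then show ?thesis
    using that xs ys zs by blast
qed

lemma word_prod_cap_set:
  assumes caps: "cap_set n A0" "cap_set n A1" "cap_set n A2"
  shows "cap_set (n * length s) (word_prod s A0 A1 A2)"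
proof -
  have vec: "A0 \<subseteq> vec n" "A1 \<subseteq> vec n" "A2 \<subseteq> vec n"
    using caps by (simp_all add: cap_set_def)
  have "x = y \<and> y = z"
    if members: "x \<in> word_prod s A0 A1 A2" "y \<in> word_prod s A0 A1 A2" "z \<in> word_prod s A0 A1 A2"
      and zero_sum: "sum3_zero x y z" for x y z
  proof -
    obtain xs ys zs where blocks: "x = concat xs" "y = concat ys" "z = concat zs"
      "length xs = length s" "length ys = length s" "length zs = length s"
      and "\<And>i. i < length s \<Longrightarrow> xs!i \<in> sel A0 A1 A2 (s!i) \<and> ys!i \<in> sel A0 A1 A2 (s!i) \<and>
             zs!i \<in> sel A0 A1 A2 (s!i) \<and> sum3_zero (xs!i) (ys!i) (zs!i)"
      using sum3_zero_word_prod_blocks[OF vec members refl refl zero_sum] by metis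
    then have "\<forall>i<length s. xs!i = ys!i \<and> ys!i = zs!i"
      using sel_cap_set[OF caps] unfolding cap_set_def by blast
    then have "xs = ys" "ys = zs"
      using blocks by (auto intro: nth_equalityI)
    then show ?thesis
      using blocks by simp
  qed
  then show ?thesis
    using word_prod_subset_vec[OF vec] by (simp add: cap_set_def)
qed

definition blocking_coord :: "nat list \<Rightarrow> nat list \<Rightarrow> nat list \<Rightarrow> bool" where
  "blocking_coord s t u \<longleftrightarrow> (\<exists>k<length s. {#s!k, t!k, u!k#} \<in> forbidden_labels)"

lemma word_prod_no_zero_sum:
  assumes ext: "extendable n A0 A1 A2" and "blocking_coord s t u"
    and "x \<in> word_prod s A0 A1 A2" "y \<in> word_prod t A0 A1 A2" "z \<in> word_prod u A0 A1 A2"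
    and "length t = length s" "length u = length s"
  shows "\<not> sum3_zero x y z"
proof
  assume "sum3_zero x y z"
  have vec: "A0 \<subseteq> vec n" "A1 \<subseteq> vec n" "A2 \<subseteq> vec n"
    using ext by (simp_all add: extendable_def cap_set_def)
  obtain xs ys zs where "\<And>i. i < length s \<Longrightarrow> xs!i \<in> sel A0 A1 A2 (s!i) \<and>
      ys!i \<in> sel A0 A1 A2 (t!i) \<and> zs!i \<in> sel A0 A1 A2 (u!i) \<and> sum3_zero (xs!i) (ys!i) (zs!i)"
    using sum3_zero_word_prod_blocks[OF vec assms(3-7) \<open>sum3_zero x y z\<close>] by metis
  then show False
    using \<open>blocking_coord s t u\<close> extendable_no_zero_sum[OF ext]
    unfolding blocking_coord_def by blast
qed

lemma words_nth: "s \<in> words m \<Longrightarrow> k < m \<Longrightarrow> s!k \<in> {0, 1, 2}"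
  unfolding words_def by (auto dest: nth_mem)

lemma admissible_zero_nonzero:
  assumes "admissible S" "s \<in> S" "t \<in> S" "s \<noteq> t"
  shows "\<exists>k<length s. s!k = 0 \<and> t!k \<noteq> 0"
proof -
  have "\<forall>s\<in>S. \<forall>t\<in>S. s \<noteq> t \<longrightarrow>
          (\<exists>i<length s. \<exists>j<length s. s!i = 0 \<and> t!i \<noteq> 0 \<and> s!j \<noteq> 0 \<and> t!j = 0)"
    using assms(1) unfolding admissible_def by (rule conjunct1)
  from this[rule_format, OF assms(2-4)] show ?thesis
    by blast
qed

lemma admissible_blocking_coord:
  assumes adm: "admissible S" and words: "S \<subseteq> words m"
    and S: "s \<in> S" "t \<in> S" "u \<in> S" and not_all_equal: "\<not> (s = t \<and> t = u)"
  shows "blocking_coord s t u"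
proof -
  have lengths: "length s = m" "length t = m" "length u = m"
    using S words by (auto simp: words_def)
  have zero_nonzero: "\<exists>k<m. v!k = 0 \<and> w!k \<in> {1, 2}" if vw: "v \<in> S" "w \<in> S" "v \<noteq> w" for v w
  proof -
    obtain k where k: "k < length v" "v!k = 0" "w!k \<noteq> 0"
      using admissible_zero_nonzero[OF adm vw] by blast
    moreover have "length v = m" "w \<in> words m"
      using vw words by (auto simp: words_def)
    ultimately show ?thesis
      using words_nth[of w m k] by auto
  qed
  consider "s = t" "t \<noteq> u" | "s = u" "s \<noteq> t" | "t = u" "s \<noteq> t" | "s \<noteq> t" "s \<noteq> u" "t \<noteq> u"
    using not_all_equal by blast
  then show ?thesis
  proof cases
    case 1
    then show ?thesis
      using zero_nonzero[of s u] S lengths by (auto simp: blocking_coord_def forbidden_labels_def)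
  next
    case 2
    then show ?thesis
      using zero_nonzero[of s t] S lengths
      by (auto simp: blocking_coord_def forbidden_labels_def add_mset_commute)
  next
    case 3
    then show ?thesis
      using zero_nonzero[of t s] S lengths
      by (auto simp: blocking_coord_def forbidden_labels_def add_mset_commute)
  next
    case 4
    then show ?thesis
      using adm S unfolding admissible_def blocking_coord_def forbidden_labels_def by blast
  qed
qed

lemma recursively_admissible_zero_coord:
  assumes RA: "recursively_admissible S" and "s \<in> S"
  shows "\<exists>k<length s. s!k = 0"
proof -
  have "admissible S" "2 \<le> card S"
    using RA by (simp_all add: recursively_admissible_def)
  then obtain t where "t \<in> S" "t \<noteq> s"
    using card_mono[of "{s}" S] by fastforce
  then show ?thesis
    using admissible_zero_nonzero[OF \<open>admissible S\<close> \<open>s \<in> S\<close>] by blast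
qed

lemma recursively_admissible_distinct_pair:
  assumes "recursively_admissible S" "s \<in> S" "t \<in> S" "s \<noteq> t"
  shows "(\<exists>i<length s. \<exists>j<length s. {s!i, t!i} = {0, 1} \<and> {s!j, t!j} = {0, 2}) \<or>
         (\<exists>k<length s. s!k = 0 \<and> t!k = 0)"
  using assms(1)[unfolded recursively_admissible_def, THEN conjunct2, THEN conjunct2]
    assms(2-4) by blast

lemma recursively_admissible_blocking_const:
  assumes RA: "recursively_admissible S" and words: "S \<subseteq> words m"
    and S: "s \<in> S" "t \<in> S" and c: "c \<in> {1, 2}"
  shows "blocking_coord s t (replicate m c)"
proof -
  have lengths: "length s = m" "length t = m"
    using S words by (auto simp: words_def)
  have zero_zero: "blocking_coord s t (replicate m c)" if "k < m" "s!k = 0" "t!k = 0" for k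
    using that c by (auto simp: blocking_coord_def forbidden_labels_def lengths)
  show ?thesis
  proof (cases "s = t")
    case True
    then show ?thesis
      using recursively_admissible_zero_coord[OF RA S(1)] zero_zero lengths by blast
  next
    case False
    then consider "\<exists>i<m. \<exists>j<m. {s!i, t!i} = {0, 1} \<and> {s!j, t!j} = {0, 2}" | "\<exists>k<m. s!k = 0 \<and> t!k = 0"
      using recursively_admissible_distinct_pair[OF RA S False] lengths by auto
    then show ?thesis
    proof cases
      case 1
      then obtain i j where "i < m" "j < m" "{s!i, t!i} = {0, 1}" "{s!j, t!j} = {0, 2}"
        by blast
      \<comment> \<open>Pair the constant label c with the coordinate carrying the other two labels.\<close>
      then show ?thesis
        using c lengths
        by (auto simp: blocking_coord_def forbidden_labels_def doubleton_eq_iff add_mset_commute)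
    next
      case 2
      then show ?thesis
        using zero_zero by blast
    qed
  qed
qed

lemma recursively_admissible_blocking_1_2:
  assumes RA: "recursively_admissible S" and words: "S \<subseteq> words m" and "s \<in> S"
  shows "blocking_coord s (replicate m 1) (replicate m 2)"
proof -
  have "length s = m"
    using words \<open>s \<in> S\<close> by (auto simp: words_def)
  then show ?thesis
    using recursively_admissible_zero_coord[OF RA \<open>s \<in> S\<close>]
    by (auto simp: blocking_coord_def forbidden_labels_def)
qed

lemma set_prod_cap_set:
  assumes ext: "extendable n A0 A1 A2" and lengths: "\<forall>s\<in>S. length s = m"
    and blocking: "\<And>s t u. s \<in> S \<Longrightarrow> t \<in> S \<Longrightarrow> u \<in> S \<Longrightarrow> \<not> (s = t \<and> t = u) \<Longrightarrow> blocking_coord s t u"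
  shows "cap_set (n * m) (set_prod S A0 A1 A2)"
proof -
  have caps: "cap_set n A0" "cap_set n A1" "cap_set n A2"
    using ext by (simp_all add: extendable_def)
  have word_caps: "cap_set (n * m) (word_prod s A0 A1 A2)" if "s \<in> S" for s
    using word_prod_cap_set[OF caps, of s] lengths that by simp
  have "x = y \<and> y = z"
    if "x \<in> word_prod s A0 A1 A2" "y \<in> word_prod t A0 A1 A2" "z \<in> word_prod u A0 A1 A2"
      and "s \<in> S" "t \<in> S" "u \<in> S" and "sum3_zero x y z" for x y z s t u
  proof (cases "s = t \<and> t = u")
    case True
    then show ?thesis
      using word_caps that unfolding cap_set_def by blast
  next
    case False
    then show ?thesis
      using word_prod_no_zero_sum[OF ext blocking] lengths that by metis
  qed
  then show ?thesis
    using word_caps unfolding cap_set_def set_prod_def by blast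
qed

lemma power_prod_eq_word_prod:
  "power_prod m A1 = word_prod (replicate m 1) A0 A1 A2"
  "power_prod m A2 = word_prod (replicate m 2) A0 A1 A2"
  by (auto simp: power_prod_def word_prod_def sel_def)

theorem lemma2p9:
  fixes n m :: nat and A0 A1 A2 :: "3 list set" and S :: "nat list set"
  assumes "extendable n A0 A1 A2"
    and "S \<subseteq> words m"
    and "recursively_admissible S"
  shows "extendable (n * m) (set_prod S A0 A1 A2) (power_prod m A1) (power_prod m A2)"
proof -
  note ext = assms(1) and words = assms(2) and RA = assms(3)
  have lengths: "\<forall>s\<in>S. length s = m"
    using words by (auto simp: words_def)
  have caps: "cap_set n A0" "cap_set n A1" "cap_set n A2"
    using ext by (simp_all add: extendable_def)
  have adm: "admissible S"
    using RA by (simp add: recursively_admissible_def)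
  have "cap_set (n * m) (set_prod S A0 A1 A2)"
    by (rule set_prod_cap_set[OF ext lengths admissible_blocking_coord[OF adm words]])
  moreover have "cap_set (n * m) (power_prod m A1)" "cap_set (n * m) (power_prod m A2)"
    using word_prod_cap_set[OF caps] by (metis power_prod_eq_word_prod length_replicate)+
  moreover have "\<not> sum3_zero x y z"
    if "s \<in> S" "t \<in> S" "x \<in> word_prod s A0 A1 A2" "y \<in> word_prod t A0 A1 A2"
      and "z \<in> word_prod (replicate m c) A0 A1 A2" "c \<in> {1, 2}" for x y z s t c
    using word_prod_no_zero_sum[OF ext recursively_admissible_blocking_const[OF RA words]] lengths that
    by simp
  moreover have "\<not> sum3_zero x y z"
    if "s \<in> S" "x \<in> word_prod s A0 A1 A2" "y \<in> word_prod (replicate m 1) A0 A1 A2"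
      and "z \<in> word_prod (replicate m 2) A0 A1 A2" for x y z s
    using word_prod_no_zero_sum[OF ext recursively_admissible_blocking_1_2[OF RA words]] lengths that
    by simp
  ultimately show ?thesis
    unfolding extendable_def set_prod_def
      power_prod_eq_word_prod(1)[of m A1 A0 A2] power_prod_eq_word_prod(2)[of m A2 A0 A1]
    by blast
qed

end
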